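(* Consider the semi-discrete Hermite–DG Vlasov–Maxwell system $\frac{dy}{dt}=\mathcal{F}^N(y)$ on $\mathbb{R}^M$ and the energies described in the context, and fix $\varepsilon\in\{0,1\}$. Let an explicit ${N_{RK}}$-stage Runge–Kutta method with ${N_{RK}}\ge2$, coefficients $(a_{ij})_{1\le j<i\le{N_{RK}}}$ and weights $(b_i)$ be given, and denote by $\varphi_{RK}(y^\tau)=y^\tau+\Delta t\sum_{i=1}^{{N_{RK}}}b_i\mathcal{F}^N(\mathcal{Y}_i)$ its step, with stages $\mathcal{Y}_1=y^\tau$, $\mathcal{Y}_i=y^\tau+\Delta t\sum_{j<i}a_{ij}\mathcal{F}^N(\mathcal{Y}_j)$. Let $\{y^\tau\}$ be the sequence produced from $y^0$ by the modified Runge–Kutta method $y^{\tau+1}=y^\tau+\gamma^\tau\Delta t\sum_{i=1}^{{N_{RK}}}b_i\mathcal{F}^N(\mathcal{Y}_i)$ (with the same stages). Set $\delta\mathcal{E}_{\mathbf{jump}}^{\tau,\tau+1}=\Delta t\sum_{i=1}^{{N_{RK}}}b_i\mathcal{E}_{\mathbf{jump}}(\mathcal{Y}_i)$ and $\delta\mathcal{E}_{\mathbf{bnd}}^{\tau,\tau+1}=\Delta t\sum_{i=1}^{{N_{RK}}}b_i\mathcal{E}_{\mathbf{bnd}}(\mathcal{Y}_i)$. Assume that for every $\tau$ $$\Big(\mathcal{E}_{\mathbf{tot}}(\varphi_{RK}(y^\tau))-\mathcal{E}_{\mathbf{tot}}(y^\tau)-\mathcal{E}_{E,B}(\varphi_{RK}(y^\tau)-y^\tau)+\delta\mathcal{E}_{\mathbf{bnd}}^{\tau,\tau+1}+\varepsilon\,\delta\mathcal{E}_{\mathbf{jump}}^{\tau,\tau+1}\Big)\,\mathcal{E}_{E,B}(\varphi_{RK}(y^\tau)-y^\tau)\neq0.$$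 Then, choosing for every $\tau$ $$\gamma^\tau=1-\frac{\mathcal{E}_{\mathbf{tot}}(\varphi_{RK}(y^\tau))-\mathcal{E}_{\mathbf{tot}}(y^\tau)+\delta\mathcal{E}_{\mathbf{bnd}}^{\tau,\tau+1}+\varepsilon\,\delta\mathcal{E}_{\mathbf{jump}}^{\tau,\tau+1}}{\mathcal{E}_{E,B}(\varphi_{RK}(y^\tau)-y^\tau)},$$ the discrete energy relation $$\mathcal{E}_{\mathbf{tot}}(y^{\tau+1})-\mathcal{E}_{\mathbf{tot}}(y^\tau)+\Delta t\sum_{i=1}^{{N_{RK}}}\widehat b_i\,\mathcal{E}_{\mathbf{bnd}}(\mathcal{Y}_i)=-\varepsilon\,\Delta t\sum_{i=1}^{{N_{RK}}}\widehat b_i\,\mathcal{E}_{\mathbf{jump}}(\mathcal{Y}_i),\qquad \widehat b_i:=\gamma^\tau b_i,$$ is satisfied for every $\tau$.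
   Context: Setting: the Vlasov–Maxwell system for $N_s$ plasma species with masses $m^s$, on a spatial domain $\Omega_x\subset\mathbb{R}^3$ partitioned into a uniform mesh of hexahedral cells $I$ with faces $\mathsf{f}$, velocity space $\mathbb{R}^3$. In the Hermite–DG semi-discretization each distribution function is $f^{s,N}(x,v,t)=\sum_{n,m,p}\sum_{I,l}C^{s,I,l}_{n,m,p}(t)\Psi_{n,m,p}(\xi^s)\varphi^{I,l}(x)$ (Hermite functions in velocity, piecewise polynomials in space) and the fields are piecewise polynomials $E^N=\sum_{I,l}E^{I,l}(t)\varphi^{I,l}$, $B^N=\sum_{I,l}B^{I,l}(t)\varphi^{I,l}$; Maxwell's equations are discretized with either central or upwind numerical fluxes. The coefficient vector $y(t)\in\mathbb{R}^M$ satisfies an autonomous ODE $dy/dt=\mathcal{F}^N(y)$. Energies: $\mathcal{E}_{\mathbf{kin}}(y)=\frac12\sum_s m^s\sum_I\int_I\int_{\mathbb{R}^3}|v|^2f^{s,N}\,dv\,dx$ (linear in $y$, $=\mu^\top y$); $\mathcal{E}_{E,B}(y)=\frac12(\omega_{ce}/\omega_{pe})^2\sum_I\int_I(|E^N|^2+|B^N|^2)\,dx$ (a quadratic form $y^\top Sy$ with $S$ symmetric, acting only on the field coefficients); $\mathcal{E}_{\mathbf{tot}}=\mathcal{E}_{\mathbf{kin}}+\mathcal{E}_{E,B}$; $\mathcal{E}_{\mathbf{bnd}}(y)=\frac12\sum_s m^s\int_{\partial\Omega_x}\int_{\mathbb{R}^3}(n\cdot v)|v|^2f^{s,N}\,dv\,dS$;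 $\mathcal{E}_{\mathbf{jump}}(y)=0$ for central Maxwell fluxes and $\mathcal{E}_{\mathbf{jump}}(y)=(\omega_{ce}/\omega_{pe})^2\sum_{\mathsf{f}}\frac12\int_{\mathsf{f}}[\![U]\!]_{\mathsf{f}}^\top|\mathbb{F}|[\![U]\!]_{\mathsf{f}}\,dS$ for upwind fluxes, with $U=(E^N,B^N)$, $[\![U]\!]_{\mathsf{f}}$ the jump across face $\mathsf{f}$ and $|\mathbb{F}|$ a fixed symmetric positive semidefinite $6\times6$ matrix (sum of the absolute values of the Maxwell flux matrices). *)

theory Defs
  imports "HOL-Analysis.Analysis"
begin

fun rk_stage :: "(real^'m \<Rightarrow> real^'m) \<Rightarrow> (nat \<Rightarrow> nat \<Rightarrow> real) \<Rightarrow> real \<Rightarrow> real^'m \<Rightarrow> nat \<Rightarrow> real^'m" where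
  "rk_stage F a dt y i = y + dt *\<^sub>R (\<Sum>j\<in>{1..<i}. a i j *\<^sub>R F (rk_stage F a dt y j))"

declare rk_stage.simps[simp del]

definition rk_incr :: "(real^'m \<Rightarrow> real^'m) \<Rightarrow> (nat \<Rightarrow> nat \<Rightarrow> real) \<Rightarrow> (nat \<Rightarrow> real) \<Rightarrow> nat \<Rightarrow> real \<Rightarrow> real^'m \<Rightarrow> real^'m" where
  "rk_incr F a b N dt y = dt *\<^sub>R (\<Sum>i=1..N. b i *\<^sub>R F (rk_stage F a dt y i))"

definition phi_RK :: "(real^'m \<Rightarrow> real^'m) \<Rightarrow> (nat \<Rightarrow> nat \<Rightarrow> real) \<Rightarrow> (nat \<Rightarrow> real) \<Rightarrow> nat \<Rightarrow> real \<Rightarrow> real^'m \<Rightarrow> real^'m" where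
  "phi_RK F a b N dt y = y + rk_incr F a b N dt y"

definition rk_delta :: "(real^'m \<Rightarrow> real^'m) \<Rightarrow> (nat \<Rightarrow> nat \<Rightarrow> real) \<Rightarrow> (nat \<Rightarrow> real) \<Rightarrow> nat \<Rightarrow> real \<Rightarrow> (real^'m \<Rightarrow> real) \<Rightarrow> real^'m \<Rightarrow> real" where
  "rk_delta F a c N dt G y = dt * (\<Sum>i=1..N. c i * G (rk_stage F a dt y i))"

end

theory Submission
  imports Defs
begin

text \<open>Along the RK increment \<open>d\<close> the total energy is a quadratic polynomial
  \<open>E x + t A + t\<^sup>2 Q\<close> in the step scale \<open>t\<close>, with \<open>Q = EEB d\<close>. Hence the defect of the
  energy balance at scale \<open>g\<close> is \<open>g (A + D + g Q)\<close>, and its nonzero root \<open>-(A + D)/Q\<close> is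
  exactly \<open>\<gamma>\<close>, since \<open>A + Q\<close> is the energy change of the unrelaxed step \<open>\<phi>\<^sub>R\<^sub>K\<close>.
  Scaling all weights \<open>b\<^sub>i\<close> by \<open>\<gamma>\<close> scales the boundary and jump terms by \<open>\<gamma>\<close>.\<close>

lemma symmetric_matrix_inner_commute:
  fixes S :: "real^'n^'n"
  assumes "transpose S = S"
  shows "x \<bullet> (S *v z) = z \<bullet> (S *v x)"
proof -
  have "x \<bullet> (S *v z) = (x v* S) \<bullet> z"
    by (simp add: dot_lmul_matrix)
  also have "\<dots> = (transpose S *v x) \<bullet> z"
    by simp
  finally show ?thesis
    using assms by (simp add: inner_commute)
qed

lemma quadratic_form_add_scaleR:
  fixes S :: "real^'n^'n"
  assumes "transpose S = S"
  shows "(x + t *\<^sub>R d) \<bullet> (S *v (x + t *\<^sub>R d))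
           = x \<bullet> (S *v x) + t * (2 * (x \<bullet> (S *v d))) + t\<^sup>2 * (d \<bullet> (S *v d))"
  using symmetric_matrix_inner_commute[OF assms, of d x]
  by (simp add: matrix_vector_right_distrib matrix_vector_mult_scaleR inner_add_left
      inner_add_right power2_eq_square algebra_simps)

lemma relaxation_root_energy_balance:
  fixes E :: "'a::real_vector \<Rightarrow> real"
  assumes quadratic: "\<And>t. E (x + t *\<^sub>R d) = E x + t * A + t\<^sup>2 * Q"
    and "Q \<noteq> 0"
    and gamma: "g = 1 - (E (x + d) - E x + D) / Q"
  shows "E (x + g *\<^sub>R d) - E x + g * D = 0"
proof -
  have "E (x + d) = E x + A + Q"
    using quadratic[of 1] by simp
  with gamma \<open>Q \<noteq> 0\<close> have "g * Q = - (A + D)"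
    by (simp add: field_simps)
  then have "g * (A + D + g * Q) = 0"
    by simp
  then show ?thesis
    using quadratic[of g] by (simp add: power2_eq_square algebra_simps)
qed

lemma rk_delta_scaled_weights:
  "rk_delta F a (\<lambda>i. g * b i) N dt G y = g * rk_delta F a b N dt G y"
  by (simp add: rk_delta_def sum_distrib_left mult_ac)

theorem theorem2:
  fixes F :: "real^'m \<Rightarrow> real^'m"
    and mu :: "real^'m" and S :: "real^'m^'m"
    and Ekin EEB Etot Ebnd Ejump :: "real^'m \<Rightarrow> real"
    and a :: "nat \<Rightarrow> nat \<Rightarrow> real" and b :: "nat \<Rightarrow> real"
    and NRK :: nat and dt eps :: real
    and y :: "nat \<Rightarrow> real^'m" and gamma :: "nat \<Rightarrow> real"
  assumes Ekin: "\<And>z. Ekin z = mu \<bullet> z"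
    and EEB: "\<And>z. EEB z = z \<bullet> (S *v z)"
    and S_sym: "transpose S = S"
    and Etot: "\<And>z. Etot z = Ekin z + EEB z"
    and eps: "eps \<in> {0, 1}"
    and NRK: "NRK \<ge> 2"
    and nondeg: "\<And>\<tau>. (Etot (phi_RK F a b NRK dt (y \<tau>)) - Etot (y \<tau>)
               - EEB (phi_RK F a b NRK dt (y \<tau>) - y \<tau>)
               + rk_delta F a b NRK dt Ebnd (y \<tau>) + eps * rk_delta F a b NRK dt Ejump (y \<tau>))
             * EEB (phi_RK F a b NRK dt (y \<tau>) - y \<tau>) \<noteq> 0"
    and gamma: "\<And>\<tau>. gamma \<tau> = 1 - (Etot (phi_RK F a b NRK dt (y \<tau>)) - Etot (y \<tau>)
               + rk_delta F a b NRK dt Ebnd (y \<tau>) + eps * rk_delta F a b NRK dt Ejump (y \<tau>))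
             / EEB (phi_RK F a b NRK dt (y \<tau>) - y \<tau>)"
    and step: "\<And>\<tau>. y (Suc \<tau>) = y \<tau> + gamma \<tau> *\<^sub>R rk_incr F a b NRK dt (y \<tau>)"
  shows "\<forall>\<tau>. Etot (y (Suc \<tau>)) - Etot (y \<tau>)
            + rk_delta F a (\<lambda>i. gamma \<tau> * b i) NRK dt Ebnd (y \<tau>)
          = - eps * rk_delta F a (\<lambda>i. gamma \<tau> * b i) NRK dt Ejump (y \<tau>)"
proof
  fix \<tau>
  define x where "x = y \<tau>"
  define d where "d = rk_incr F a b NRK dt x"
  define D where "D = rk_delta F a b NRK dt Ebnd x + eps * rk_delta F a b NRK dt Ejump x"
  have phi: "phi_RK F a b NRK dt x = x + d"
    by (simp add: phi_RK_def d_def)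
  have quadratic: "Etot (x + t *\<^sub>R d) = Etot x + t * (mu \<bullet> d + 2 * (x \<bullet> (S *v d))) + t\<^sup>2 * EEB d"
    for t
    unfolding Etot Ekin EEB quadratic_form_add_scaleR[OF S_sym]
    by (simp add: inner_add_right algebra_simps)
  have "EEB d \<noteq> 0"
    using nondeg[of \<tau>] by (simp add: phi flip: x_def)
  moreover have "gamma \<tau> = 1 - (Etot (x + d) - Etot x + D) / EEB d"
    using gamma[of \<tau>] by (simp add: phi D_def flip: x_def)
  ultimately have "Etot (x + gamma \<tau> *\<^sub>R d) - Etot x + gamma \<tau> * D = 0"
    by (rule relaxation_root_energy_balance[OF quadratic])
  then show "Etot (y (Suc \<tau>)) - Etot (y \<tau>)
            + rk_delta F a (\<lambda>i. gamma \<tau> * b i) NRK dt Ebnd (y \<tau>)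
          = - eps * rk_delta F a (\<lambda>i. gamma \<tau> * b i) NRK dt Ejump (y \<tau>)"
    unfolding rk_delta_scaled_weights
    by (simp add: step D_def algebra_simps flip: x_def d_def)
qed

end
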